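(* Let $p\in[0,1]^n$ and $k\in\mathbb N$, and let $\bar X_1,\dots,\bar X_k\in\{0,1\}^n$ be independent random vectors, each having independent entries with $\Pr((\bar X_l)_i=1)=p_i$. Let $f$ be the objective function of the binary integer program below and $x^*\in\{0,1\}^n$ an optimizer of it, fix $\delta>0$, let $\mu:=\mathbb E_{x\sim p}[\|x-x^*\|_1]$ (where $x\sim p$ means $x$ has independent Bernoulli$(p_i)$ entries), and let $L_f$ be the Lipschitz constant of $f$ with respect to the $1$-norm. If $\mu\le\delta/L_f$, then \[\psi(p,k):=\Pr\big(\exists\,l\in[k]:\ f(\bar X_l)\le f(x^* )+\delta\big)\ge1-\exp\!\left(k\left(\frac{\delta}{L_f}\Big(1-\log\frac{\delta}{\mu L_f}\Big)-\mu\right)\right).\]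
   Context: The binary integer program is $\min_{x\in\{0,1\}^n} f(x):=\langle x,Qx\rangle+\langle c,x\rangle$ subject to $Ax\ge b$ and $Bx=d$, with $Q\in\mathbb R^{n\times n}$, $c\in\mathbb R^n$, $A\in\mathbb R^{m_1\times n}$, $b\in\mathbb R^{m_1}$, $B\in\mathbb R^{m_2\times n}$, $d\in\mathbb R^{m_2}$. $[k]=\{1,\dots,k\}$. *)

theory Defs
  imports "HOL-Probability.Probability"
begin

text \<open>Binary vectors in {0,1}^n are represented as functions nat => bool;
  only the coordinates 0..n-1 (i.e. i < n) are relevant.\<close>

definition bvec :: "(nat \<Rightarrow> bool) \<Rightarrow> nat \<Rightarrow> real" where
  "bvec x i = (if x i then 1 else 0)"

definition bip_obj :: "nat \<Rightarrow> (nat \<Rightarrow> nat \<Rightarrow> real) \<Rightarrow> (nat \<Rightarrow> real) \<Rightarrow> (nat \<Rightarrow> bool) \<Rightarrow> real" where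
  "bip_obj n Q c x = (\<Sum>i<n. bvec x i * (\<Sum>j<n. Q i j * bvec x j)) + (\<Sum>i<n. c i * bvec x i)"

definition bip_feasible :: "nat \<Rightarrow> nat \<Rightarrow> (nat \<Rightarrow> nat \<Rightarrow> real) \<Rightarrow> (nat \<Rightarrow> real)
    \<Rightarrow> nat \<Rightarrow> (nat \<Rightarrow> nat \<Rightarrow> real) \<Rightarrow> (nat \<Rightarrow> real) \<Rightarrow> (nat \<Rightarrow> bool) \<Rightarrow> bool" where
  "bip_feasible n m1 A b m2 B d x \<longleftrightarrow>
     (\<forall>r<m1. (\<Sum>j<n. A r j * bvec x j) \<ge> b r) \<and> (\<forall>r<m2. (\<Sum>j<n. B r j * bvec x j) = d r)"

definition bip_optimizer :: "nat \<Rightarrow> (nat \<Rightarrow> nat \<Rightarrow> real) \<Rightarrow> (nat \<Rightarrow> real) \<Rightarrow> nat \<Rightarrow> (nat \<Rightarrow> nat \<Rightarrow> real) \<Rightarrow> (nat \<Rightarrow> real)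
    \<Rightarrow> nat \<Rightarrow> (nat \<Rightarrow> nat \<Rightarrow> real) \<Rightarrow> (nat \<Rightarrow> real) \<Rightarrow> (nat \<Rightarrow> bool) \<Rightarrow> bool" where
  "bip_optimizer n Q c m1 A b m2 B d xs \<longleftrightarrow>
     bip_feasible n m1 A b m2 B d xs \<and>
     (\<forall>x. bip_feasible n m1 A b m2 B d x \<longrightarrow> bip_obj n Q c xs \<le> bip_obj n Q c x)"

definition dist1 :: "nat \<Rightarrow> (nat \<Rightarrow> bool) \<Rightarrow> (nat \<Rightarrow> bool) \<Rightarrow> real" where
  "dist1 n x y = (\<Sum>i<n. \<bar>bvec x i - bvec y i\<bar>)"

definition lipschitz1 :: "nat \<Rightarrow> ((nat \<Rightarrow> bool) \<Rightarrow> real) \<Rightarrow> real \<Rightarrow> bool" where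
  "lipschitz1 n f L \<longleftrightarrow> (\<forall>x y. \<bar>f x - f y\<bar> \<le> L * dist1 n x y)"

definition bern_vec :: "nat \<Rightarrow> (nat \<Rightarrow> real) \<Rightarrow> (nat \<Rightarrow> bool) pmf" where
  "bern_vec n p = Pi_pmf {..<n} False (\<lambda>i. bernoulli_pmf (p i))"

definition bern_samples :: "nat \<Rightarrow> nat \<Rightarrow> (nat \<Rightarrow> real) \<Rightarrow> (nat \<Rightarrow> nat \<Rightarrow> bool) pmf" where
  "bern_samples k n p = Pi_pmf {..<k} (\<lambda>_. False) (\<lambda>_. bern_vec n p)"

end

theory Submission
  imports Defs
begin

text \<open>Under x \<sim> p the distance \<open>dist1 n x xs\<close> is a sum of independent Bernoulli
  variables with total mean \<mu>, so the Chernoff bound with parameter \<open>s = ln (t / \<mu>)\<close> gives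
  \<open>Pr (dist1 n x xs \<ge> t) \<le> exp (t (1 - ln (t / \<mu>)) - \<mu>)\<close> for \<open>t \<ge> \<mu>\<close>. By the Lipschitz
  property a sample fails to be \<delta>-optimal only if its distance is at least \<open>t = \<delta> / L\<close>, and the
  k samples fail simultaneously with probability at most the k-th power of that bound.\<close>

lemma finite_set_pmf_bern_vec: "finite (set_pmf (bern_vec n p))"
  unfolding bern_vec_def by (auto simp: set_Pi_pmf intro: finite_PiE_dflt)

lemma integrable_bern_vec [simp]:
  fixes f :: "(nat \<Rightarrow> bool) \<Rightarrow> real"
  shows "integrable (measure_pmf (bern_vec n p)) f"
  by (rule integrable_measure_pmf_finite[OF finite_set_pmf_bern_vec])

lemma map_pmf_bern_vec_component:
  "i < n \<Longrightarrow> map_pmf (\<lambda>x. x i) (bern_vec n p) = bernoulli_pmf (p i)"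
  unfolding bern_vec_def by (simp add: Pi_pmf_component)

definition mismatch_prob :: "(nat \<Rightarrow> real) \<Rightarrow> (nat \<Rightarrow> bool) \<Rightarrow> nat \<Rightarrow> real" where
  "mismatch_prob p y i = (if y i then 1 - p i else p i)"

lemma dist1_eq_sum_mismatch: "dist1 n x y = (\<Sum>i<n. of_bool (x i \<noteq> y i))"
  unfolding dist1_def bvec_def by (intro sum.cong) auto

lemma dist1_nonneg: "0 \<le> dist1 n x y"
  unfolding dist1_def by (simp add: sum_nonneg)

lemma expectation_dist1_bern_vec:
  assumes "\<forall>i<n. 0 \<le> p i \<and> p i \<le> 1"
  shows "measure_pmf.expectation (bern_vec n p) (\<lambda>x. dist1 n x y) = (\<Sum>i<n. mismatch_prob p y i)"
proof -
  have "measure_pmf.expectation (bern_vec n p) (\<lambda>x. dist1 n x y)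
      = (\<Sum>i<n. measure_pmf.expectation (map_pmf (\<lambda>x. x i) (bern_vec n p)) (\<lambda>b. of_bool (b \<noteq> y i)))"
    unfolding dist1_eq_sum_mismatch integral_map_pmf by (rule Bochner_Integration.integral_sum) simp
  also have "\<dots> = (\<Sum>i<n. mismatch_prob p y i)"
    using assms by (intro sum.cong) (auto simp: map_pmf_bern_vec_component mismatch_prob_def)
  finally show ?thesis .
qed

lemma expectation_exp_mismatch_bernoulli:
  assumes "0 \<le> p i" "p i \<le> 1"
  shows "measure_pmf.expectation (bernoulli_pmf (p i)) (\<lambda>b. exp (s * of_bool (b \<noteq> y i)))
       = 1 + mismatch_prob p y i * (exp s - 1)"
  using assms by (cases "y i") (simp_all add: mismatch_prob_def algebra_simps)

lemma expectation_exp_dist1_le: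
  assumes "\<forall>i<n. 0 \<le> p i \<and> p i \<le> 1"
  shows "measure_pmf.expectation (bern_vec n p) (\<lambda>x. exp (s * dist1 n x y))
       \<le> exp ((exp s - 1) * (\<Sum>i<n. mismatch_prob p y i))"
proof -
  let ?q = "mismatch_prob p y"
  have "measure_pmf.expectation (bern_vec n p) (\<lambda>x. exp (s * dist1 n x y))
      = measure_pmf.expectation (bern_vec n p) (\<lambda>x. \<Prod>i<n. exp (s * of_bool (x i \<noteq> y i)))"
    by (simp only: dist1_eq_sum_mismatch sum_distrib_left exp_sum[OF finite_lessThan])
  also have "\<dots> = (\<Prod>i<n. measure_pmf.expectation (bernoulli_pmf (p i)) (\<lambda>b. exp (s * of_bool (b \<noteq> y i))))"
    unfolding bern_vec_def by (rule expectation_prod_Pi_pmf) (auto intro: integrable_measure_pmf_finite)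
  also have "\<dots> = (\<Prod>i<n. 1 + ?q i * (exp s - 1))"
    by (intro prod.cong refl expectation_exp_mismatch_bernoulli) (use assms in auto)
  also have "\<dots> \<le> (\<Prod>i<n. exp (?q i * (exp s - 1)))"
  proof (intro prod_mono conjI)
    fix i assume "i \<in> {..<n}"
    then have "0 \<le> ?q i" "?q i \<le> 1"
      using assms by (auto simp: mismatch_prob_def)
    then have "0 \<le> (1 - ?q i) + ?q i * exp s"
      by simp
    then show "0 \<le> 1 + ?q i * (exp s - 1)"
      by (simp add: algebra_simps)
    show "1 + ?q i * (exp s - 1) \<le> exp (?q i * (exp s - 1))"
      by (rule exp_ge_add_one_self)
  qed
  also have "\<dots> = exp ((exp s - 1) * (\<Sum>i<n. ?q i))"
    by (simp add: exp_sum sum_distrib_left mult.commute)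
  finally show ?thesis .
qed

lemma prob_dist1_ge_le:
  assumes "\<forall>i<n. 0 \<le> p i \<and> p i \<le> 1"
    and \<mu>: "\<mu> = measure_pmf.expectation (bern_vec n p) (\<lambda>x. dist1 n x y)"
    and "0 < \<mu>" "\<mu> \<le> t"
  shows "measure_pmf.prob (bern_vec n p) {x. t \<le> dist1 n x y} \<le> exp (t * (1 - ln (t / \<mu>)) - \<mu>)"
proof (cases "t = \<mu>")
  case True
  then show ?thesis by simp
next
  case False
  let ?M = "measure_pmf (bern_vec n p)"
  define s where "s = ln (t / \<mu>)"
  have "0 < s" and exp_s: "exp s = t / \<mu>"
    using False assms(3,4) by (simp_all add: s_def)
  have "measure ?M {x. t \<le> dist1 n x y}
      \<le> exp (- s * t) * measure_pmf.expectation (bern_vec n p) (\<lambda>x. exp (s * dist1 n x y))"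
    using measure_pmf.Chernoff_ineq_ge[OF \<open>0 < s\<close>, of "bern_vec n p" "space ?M" "\<lambda>x. dist1 n x y" t]
    by (simp add: set_lebesgue_integral_def set_integrable_def)
  also have "\<dots> \<le> exp (- s * t) * exp ((exp s - 1) * \<mu>)"
    using expectation_exp_dist1_le[OF assms(1), of s y]
    by (simp add: \<mu> expectation_dist1_bern_vec[OF assms(1)])
  also have "\<dots> = exp (t * (1 - s) - \<mu>)"
    using \<open>0 < \<mu>\<close> by (simp add: exp_s flip: exp_add) (simp add: field_simps)
  finally show ?thesis
    by (simp add: s_def)
qed

lemma prob_dist1_ge_eq_0:
  assumes "measure_pmf.expectation (bern_vec n p) (\<lambda>x. dist1 n x y) = 0" "0 < t"
  shows "measure_pmf.prob (bern_vec n p) {x. t \<le> dist1 n x y} = 0"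
proof -
  have "measure_pmf.prob (bern_vec n p) {x. t \<le> dist1 n x y}
      \<le> measure_pmf.expectation (bern_vec n p) (\<lambda>x. dist1 n x y) / t"
    using integral_Markov_inequality_measure[of "measure_pmf (bern_vec n p)" "\<lambda>x. dist1 n x y" UNIV t]
    using assms(2) by (simp add: dist1_nonneg)
  then show ?thesis
    using assms(1) by (simp add: measure_le_0_iff)
qed

lemma lipschitz1_dist1_ge:
  assumes "lipschitz1 n f L" "0 < L" "f y + \<delta> < f x"
  shows "\<delta> / L \<le> dist1 n x y"
proof -
  have "f x - f y \<le> L * dist1 n x y"
    using assms(1) abs_le_D1 unfolding lipschitz1_def by blast
  then show ?thesis
    using assms(2,3) by (simp add: divide_le_eq mult.commute)
qed

lemma prob_Pi_pmf_ex_in: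
  assumes "finite I"
  shows "measure_pmf.prob (Pi_pmf I dflt (\<lambda>_. M)) {X. \<exists>l\<in>I. X l \<in> S}
       = 1 - measure_pmf.prob M (- S) ^ card I"
proof -
  have "{X. \<exists>l\<in>I. X l \<in> S} = UNIV - Pi I (\<lambda>_. - S)"
    by auto
  then show ?thesis
    using measure_pmf.prob_compl[of "Pi I (\<lambda>_. - S)" "Pi_pmf I dflt (\<lambda>_. M)"] assms
    by (simp add: measure_Pi_pmf_Pi)
qed

theorem mainTheorem6:
  fixes n k m1 m2 :: nat
    and p :: "nat \<Rightarrow> real"
    and Q A B :: "nat \<Rightarrow> nat \<Rightarrow> real"
    and c b d :: "nat \<Rightarrow> real"
    and xs :: "nat \<Rightarrow> bool"
    and \<delta> L \<mu> :: real
  assumes p01: "\<forall>i<n. 0 \<le> p i \<and> p i \<le> 1"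
    and opt: "bip_optimizer n Q c m1 A b m2 B d xs"
    and delta: "\<delta> > 0"
    and Lpos: "L > 0"
    and Lip: "lipschitz1 n (bip_obj n Q c) L"
    and mu: "\<mu> = measure_pmf.expectation (bern_vec n p) (\<lambda>x. dist1 n x xs)"
    and small: "\<mu> \<le> \<delta> / L"
  shows "measure_pmf.prob (bern_samples k n p)
           {X. \<exists>l<k. bip_obj n Q c (X l) \<le> bip_obj n Q c xs + \<delta>}
         \<ge> 1 - exp (real k * ((\<delta> / L) * (1 - ln (\<delta> / (\<mu> * L))) - \<mu>))"
proof -
  let ?f = "bip_obj n Q c" and ?e = "(\<delta> / L) * (1 - ln (\<delta> / (\<mu> * L))) - \<mu>"
  define S where "S = {x. ?f x \<le> ?f xs + \<delta>}"
  have miss: "measure_pmf.prob (bern_vec n p) (- S) \<le> exp ?e"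
  proof -
    have "measure_pmf.prob (bern_vec n p) (- S) \<le> measure_pmf.prob (bern_vec n p) {x. \<delta> / L \<le> dist1 n x xs}"
      by (rule measure_pmf.finite_measure_mono) (auto simp: S_def intro: lipschitz1_dist1_ge[OF Lip Lpos])
    also have "\<dots> \<le> exp ?e"
    proof (cases "\<mu> = 0")
      case True
      \<comment> \<open>Here \<open>ln (\<delta> / (\<mu> * L)) = ln 0 = 0\<close> is a junk value, but the failure probability is 0.\<close>
      then show ?thesis
        using prob_dist1_ge_eq_0[of n p xs "\<delta> / L"] mu delta Lpos by simp
    next
      case False
      then have "0 < \<mu>"
        using mu by (simp add: dist1_nonneg order_less_le)
      then show ?thesis
        using prob_dist1_ge_le[OF p01 mu _ small] by (simp add: mult.commute)
    qed
    finally show ?thesis .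
  qed
  have "1 - exp (real k * ?e) = 1 - exp ?e ^ k"
    by (simp add: exp_of_nat_mult)
  also have "\<dots> \<le> 1 - measure_pmf.prob (bern_vec n p) (- S) ^ k"
    using miss by (simp add: power_mono)
  also have "\<dots> = measure_pmf.prob (bern_samples k n p) {X. \<exists>l\<in>{..<k}. X l \<in> S}"
    by (simp add: bern_samples_def prob_Pi_pmf_ex_in)
  also have "{X. \<exists>l\<in>{..<k}. X l \<in> S} = {X. \<exists>l<k. ?f (X l) \<le> ?f xs + \<delta>}"
    by (auto simp: S_def)
  finally show ?thesis .
qed

end
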